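(* Let $\mathbb H\subseteq\mathcal G^{\mathrm{dyad}}$ be a group, $n,m\ge1$, $0\le k\le n\wedge m$, $0\le r\le(n\wedge m)-k$, and let $f:((0,1]\times\mathbb R)^n\to\mathbb R$, $f':((0,1]\times\mathbb R)^m\to\mathbb R$ be measurable with $f\in L_2^n$, $f'\in L_2^m$ and $\int_{((0,1]\times\mathbb R)^k}|f(\alpha,\gamma,\rho)f'(\rho,\gamma,\beta)|\,d\mathbbm m^{\otimes k}(\rho)<\infty$ for all $(\alpha,\beta,\gamma)\in((0,1]\times\mathbb R)^{n-k-r}\times((0,1]\times\mathbb R)^{m-k-r}\times((0,1]\times\mathbb R)^r$. Define $$(f\otimes_k^rf')(\alpha,\beta,\gamma)=\Pi_x(\gamma)\int_{((0,1]\times\mathbb R)^k}f(\alpha,\gamma,\rho)f'(\rho,\gamma,\beta)\,d\mathbbm m^{\otimes k}(\rho),$$ where $\Pi_x(\gamma)$ is the product of the $x$-coordinates of $\gamma$. If $f$ is constant on the orbits of $\mathbb H[n]$ and $f'$ is constant on the orbits of $\mathbb H[m]$, then $f\otimes_k^rf'$ is constant on the orbits of $\mathbb H[n+m-2k-r]$.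
   Context: $\mu$ is a $\sigma$-finite Borel measure on $\mathbb R$ and $\mathbbm m=\lambda\otimes\mu$ on $(0,1]\times\mathbb R$ with $\lambda$ Lebesgue measure; $L_2^n=L_2(((0,1]\times\mathbb R)^n,\mathbbm m^{\otimes n})$. $\mathcal G^{\mathrm{dyad}}$ is the group of maps $g_\pi(t)=\pi(j)2^{-d}-(j2^{-d}-t)$ for $t\in((j-1)2^{-d},j2^{-d}]$, $\pi$ a permutation of $\{1,\dots,2^d\}$, $d\ge0$. For $g\in\mathcal G^{\mathrm{dyad}}$, $g[p]((t_1,x_1),\dots,(t_p,x_p))=((g(t_1),x_1),\dots,(g(t_p),x_p))$ and $\mathbb H[p]=\{g[p]:g\in\mathbb H\}$; the orbit of $z$ is $\{g[p](z):g\in\mathbb H\}$. *)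

theory Defs
  imports "HOL-Analysis.Analysis"
begin

definition mm :: "real measure \<Rightarrow> (real \<times> real) measure" where
  "mm mu = restrict_space lborel {0<..1} \<Otimes>\<^sub>M mu"

text \<open>Product measure m^{otimes p}; p-tuples are extensional functions on {..<p}.\<close>
definition mmp :: "real measure \<Rightarrow> nat \<Rightarrow> (nat \<Rightarrow> real \<times> real) measure" where
  "mmp mu p = PiM {..<p} (\<lambda>_. mm mu)"

definition G_dyad :: "(real \<Rightarrow> real) set" where
  "G_dyad = {g. \<exists>(d::nat) (\<pi>::nat \<Rightarrow> nat). \<pi> permutes {1..2^d} \<and>
      (\<forall>j\<in>{1..2^d}. \<forall>t\<in>{(real j - 1) / 2^d <.. real j / 2^d}.
          g t = real (\<pi> j) / 2^d - (real j / 2^d - t)) \<and>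
      (\<forall>t. t \<notin> {0<..1} \<longrightarrow> g t = t)}"

definition is_group_of_maps :: "(real \<Rightarrow> real) set \<Rightarrow> bool" where
  "is_group_of_maps H \<longleftrightarrow> id \<in> H \<and> (\<forall>g\<in>H. \<forall>h\<in>H. g \<circ> h \<in> H) \<and>
      (\<forall>g\<in>H. \<exists>h\<in>H. g \<circ> h = id \<and> h \<circ> g = id)"

definition lift_map :: "(real \<Rightarrow> real) \<Rightarrow> nat \<Rightarrow> (nat \<Rightarrow> real \<times> real) \<Rightarrow> (nat \<Rightarrow> real \<times> real)" where
  "lift_map g p z = (\<lambda>i\<in>{..<p}. (g (fst (z i)), snd (z i)))"

definition orbit :: "(real \<Rightarrow> real) set \<Rightarrow> nat \<Rightarrow> (nat \<Rightarrow> real \<times> real) \<Rightarrow> (nat \<Rightarrow> real \<times> real) set" where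
  "orbit H p z = {lift_map g p z | g. g \<in> H}"

definition const_on_orbits :: "real measure \<Rightarrow> (real \<Rightarrow> real) set \<Rightarrow> nat \<Rightarrow> ((nat \<Rightarrow> real \<times> real) \<Rightarrow> real) \<Rightarrow> bool" where
  "const_on_orbits mu H p F \<longleftrightarrow>
     (\<forall>z\<in>space (mmp mu p). \<forall>w\<in>orbit H p z. F w = F z)"

definition tcat :: "nat \<Rightarrow> nat \<Rightarrow> (nat \<Rightarrow> 'a) \<Rightarrow> (nat \<Rightarrow> 'a) \<Rightarrow> nat \<Rightarrow> 'a" where
  "tcat p q a b = (\<lambda>i\<in>{..<p+q}. if i < p then a i else b (i - p))"

definition tpart :: "nat \<Rightarrow> nat \<Rightarrow> (nat \<Rightarrow> 'a) \<Rightarrow> nat \<Rightarrow> 'a" where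
  "tpart s l z = (\<lambda>i\<in>{..<l}. z (s + i))"

definition contr_integrand ::
  "nat \<Rightarrow> nat \<Rightarrow> nat \<Rightarrow> nat \<Rightarrow> ((nat \<Rightarrow> real \<times> real) \<Rightarrow> real) \<Rightarrow> ((nat \<Rightarrow> real \<times> real) \<Rightarrow> real)
    \<Rightarrow> (nat \<Rightarrow> real \<times> real) \<Rightarrow> (nat \<Rightarrow> real \<times> real) \<Rightarrow> (nat \<Rightarrow> real \<times> real) \<Rightarrow> (nat \<Rightarrow> real \<times> real) \<Rightarrow> real" where
  "contr_integrand n m k r f f' \<alpha> \<beta> \<gamma> \<rho> =
     f (tcat (n - k - r + r) k (tcat (n - k - r) r \<alpha> \<gamma>) \<rho>) *
     f' (tcat (k + r) (m - k - r) (tcat k r \<rho> \<gamma>) \<beta>)"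

text \<open>(f \<otimes>_k^r f')(alpha,beta,gamma), as a function of the concatenated (n+m-2k-r)-tuple.\<close>
definition contraction ::
  "real measure \<Rightarrow> nat \<Rightarrow> nat \<Rightarrow> nat \<Rightarrow> nat \<Rightarrow> ((nat \<Rightarrow> real \<times> real) \<Rightarrow> real)
     \<Rightarrow> ((nat \<Rightarrow> real \<times> real) \<Rightarrow> real) \<Rightarrow> (nat \<Rightarrow> real \<times> real) \<Rightarrow> real" where
  "contraction mu n m k r f f' z =
     (let a = n - k - r; b = m - k - r;
          \<alpha> = tpart 0 a z; \<beta> = tpart a b z; \<gamma> = tpart (a + b) r z
      in (\<Prod>i<r. snd (\<gamma> i)) *
         (\<integral>\<rho>. contr_integrand n m k r f f' \<alpha> \<beta> \<gamma> \<rho> \<partial>mmp mu k))"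

end

theory Submission
  imports Defs
begin

text \<open>Every map in G_dyad is a piecewise translation permuting the dyadic intervals of some level,
so it preserves Lebesgue measure on (0,1], and hence g[p] preserves the product measure m^{\<otimes>p}.
Since g[\<cdot>] commutes with splitting and concatenating tuples, the substitution \<rho> \<mapsto> g[k] \<rho> in the
integral defining the contraction, together with the orbit invariance of f and f', shows that the
integral does not change when its arguments are moved by g; the factor \<Pi>_x(\<gamma>) is untouched
because g only acts on the time coordinates.\<close>

definition dyadic_interval :: "nat \<Rightarrow> nat \<Rightarrow> real set" where
  "dyadic_interval d j = {(real j - 1) / 2^d <.. real j / 2^d}"

lemma dyadic_interval_iff_ceiling: "t \<in> dyadic_interval d j \<longleftrightarrow> \<lceil>t * 2^d\<rceil> = int j"
proof -
  have "t \<in> dyadic_interval d j \<longleftrightarrow> real j - 1 < t * 2^d \<and> t * 2^d \<le> real j"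
    unfolding dyadic_interval_def by (auto simp: field_simps)
  also have "\<dots> \<longleftrightarrow> \<lceil>t * 2^d\<rceil> = int j"
    by (simp add: ceiling_eq_iff)
  finally show ?thesis .
qed

lemma disjoint_family_dyadic_interval: "disjoint_family_on (dyadic_interval d) S"
  unfolding disjoint_family_on_def by (auto simp: dyadic_interval_iff_ceiling)

lemma UN_dyadic_interval: "(\<Union>j\<in>{1..2^d}. dyadic_interval d j) = {0<..1::real}"
proof (intro equalityI subsetI)
  fix t assume "t \<in> (\<Union>j\<in>{1..2^d}. dyadic_interval d j)"
  then obtain j where j: "j \<in> {1..2^d}" "t \<in> dyadic_interval d j" by blast
  have "real j - 1 < t * 2^d" "t * 2^d \<le> real j"
    using j(2) by (auto simp: dyadic_interval_def field_simps)
  moreover have "1 \<le> real j" "real j \<le> 2^d"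
    using j(1) by auto
  ultimately have "0 < t * 2^d" "t * 2^d \<le> 2^d" by linarith+
  then show "t \<in> {0<..1}" by (simp add: zero_less_mult_iff)
next
  fix t :: real assume t: "t \<in> {0<..1}"
  let ?c = "\<lceil>t * 2^d\<rceil>"
  have "1 \<le> ?c" using t by (simp add: one_le_ceiling)
  moreover have "t * 2^d \<le> 2^d" using t by simp
  then have "?c \<le> 2^d" by (metis ceiling_le_iff of_int_numeral of_int_power)
  ultimately have "nat ?c \<in> {1..2^d}" "t \<in> dyadic_interval d (nat ?c)"
    by (auto simp: dyadic_interval_iff_ceiling nat_le_iff le_nat_iff)
  then show "t \<in> (\<Union>j\<in>{1..2^d}. dyadic_interval d j)" by blast
qed

definition dyadic_shift :: "(nat \<Rightarrow> nat) \<Rightarrow> nat \<Rightarrow> nat \<Rightarrow> real" where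
  "dyadic_shift \<pi> d j = (real (\<pi> j) - real j) / 2^d"

lemma add_dyadic_shift_mem_iff:
  "t + dyadic_shift \<pi> d j \<in> dyadic_interval d (\<pi> j) \<longleftrightarrow> t \<in> dyadic_interval d j"
proof -
  have "(t + dyadic_shift \<pi> d j) * 2^d = t * 2^d + of_int (int (\<pi> j) - int j)"
    by (simp add: dyadic_shift_def field_simps)
  then show ?thesis
    unfolding dyadic_interval_iff_ceiling by (simp add: ceiling_add_of_int) linarith
qed

lemma sets_dyadic_interval [measurable]: "dyadic_interval d j \<in> sets borel"
  unfolding dyadic_interval_def by simp

lemma emeasure_lborel_vimage_translate:
  assumes "B \<in> sets borel"
  shows "emeasure lborel ((\<lambda>t::real. t + c) -` B) = emeasure lborel B"
proof -
  have "emeasure lborel B = emeasure (distr lborel borel ((+) c)) B"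
    by (simp add: lborel_distr_plus)
  also have "\<dots> = emeasure lborel ((+) c -` B \<inter> space lborel)"
    using assms by (subst emeasure_distr) auto
  also have "(+) c -` B \<inter> space lborel = (\<lambda>t. t + c) -` B"
    by (auto simp: add.commute)
  finally show ?thesis by simp
qed

lemma G_dyadE:
  assumes "g \<in> G_dyad"
  obtains \<pi> d where "\<pi> permutes {1..2^d}"
    and "\<forall>j\<in>{1..2^d}. \<forall>t\<in>dyadic_interval d j. g t = t + dyadic_shift \<pi> d j"
proof -
  from assms obtain d and \<pi> :: "nat \<Rightarrow> nat" where "\<pi> permutes {1..2^d}"
    and g: "\<forall>j\<in>{1..2^d}. \<forall>t\<in>dyadic_interval d j. g t = real (\<pi> j) / 2^d - (real j / 2^d - t)"
    unfolding G_dyad_def dyadic_interval_def by blast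
  moreover have "\<forall>j\<in>{1..2^d}. \<forall>t\<in>dyadic_interval d j. g t = t + dyadic_shift \<pi> d j"
    using g by (simp add: dyadic_shift_def diff_divide_distrib)
  ultimately show ?thesis using that by blast
qed

context
  fixes g :: "real \<Rightarrow> real" and d :: nat and \<pi> :: "nat \<Rightarrow> nat"
  assumes permutes: "\<pi> permutes {1..2^d}"
    and translate: "\<forall>j\<in>{1..2^d}. \<forall>t\<in>dyadic_interval d j. g t = t + dyadic_shift \<pi> d j"
begin

private lemma dyadic_interval_vimage:
  assumes "j \<in> {1..2^d}"
  shows "dyadic_interval d j \<inter> g -` A
    = (\<lambda>t. t + dyadic_shift \<pi> d j) -` (dyadic_interval d (\<pi> j) \<inter> A)"
proof -
  have "t \<in> dyadic_interval d j \<and> g t \<in> A \<longleftrightarrow>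
      t + dyadic_shift \<pi> d j \<in> dyadic_interval d (\<pi> j) \<and>
      t + dyadic_shift \<pi> d j \<in> A" for t
    using translate assms add_dyadic_shift_mem_iff by auto
  then show ?thesis by blast
qed

lemma dyadic_permutation_vimage:
  "g -` A \<inter> {0<..1}
    = (\<Union>j\<in>{1..2^d}. (\<lambda>t. t + dyadic_shift \<pi> d j) -` (dyadic_interval d (\<pi> j) \<inter> A))"
proof -
  have "g -` A \<inter> {0<..1} = (\<Union>j\<in>{1..2^d}. dyadic_interval d j \<inter> g -` A)"
    using UN_dyadic_interval by blast
  also have "\<dots>
    = (\<Union>j\<in>{1..2^d}. (\<lambda>t. t + dyadic_shift \<pi> d j) -` (dyadic_interval d (\<pi> j) \<inter> A))"
    using dyadic_interval_vimage by (intro SUP_cong) auto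
  finally show ?thesis .
qed

lemma dyadic_permutation_vimage_borel: "A \<in> sets borel \<Longrightarrow> g -` A \<inter> {0<..1} \<in> sets borel"
  unfolding dyadic_permutation_vimage by (intro sets.finite_UN) auto

lemma dyadic_permutation_maps_unit_interval:
  assumes "t \<in> {0<..1}"
  shows "g t \<in> {0<..1}"
proof -
  obtain j where j: "j \<in> {1..2^d}" "t \<in> dyadic_interval d j"
    using assms UN_dyadic_interval by blast
  have "\<pi> j \<in> {1..2^d}"
    using permutes_in_image[OF permutes] j(1) by blast
  moreover have "g t \<in> dyadic_interval d (\<pi> j)"
    using translate j add_dyadic_shift_mem_iff by simp
  ultimately show ?thesis
    using UN_dyadic_interval by blast
qed

lemma emeasure_dyadic_permutation_vimage:
  assumes A: "A \<subseteq> {0<..1}" "A \<in> sets borel"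
  shows "emeasure lborel (g -` A \<inter> {0<..1}) = emeasure lborel A"
proof -
  define J where "J = {1..(2::nat)^d}"
  define V where "V j = (\<lambda>t. t + dyadic_shift \<pi> d j) -` (dyadic_interval d (\<pi> j) \<inter> A)" for j
  have "emeasure lborel (g -` A \<inter> {0<..1}) = (\<Sum>j\<in>J. emeasure lborel (V j))"
    unfolding dyadic_permutation_vimage J_def[symmetric] V_def[symmetric]
  proof (rule sum_emeasure[symmetric])
    have "V j \<subseteq> dyadic_interval d j" for j
      using add_dyadic_shift_mem_iff unfolding V_def by auto
    then show "disjoint_family_on V J"
      using disjoint_family_dyadic_interval[of d J] unfolding disjoint_family_on_def by blast
    show "V ` J \<subseteq> sets lborel"
      using A(2) unfolding V_def by auto
    show "finite J"
      by (simp add: J_def)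
  qed
  also have "\<dots> = (\<Sum>j\<in>J. emeasure lborel (dyadic_interval d (\<pi> j) \<inter> A))"
    using A unfolding V_def by (intro sum.cong refl emeasure_lborel_vimage_translate) auto
  also have "\<dots> = (\<Sum>j\<in>J. emeasure lborel (dyadic_interval d j \<inter> A))"
    using sum.permute[OF permutes[folded J_def], of "\<lambda>j. emeasure lborel (dyadic_interval d j \<inter> A)"]
    by (simp add: o_def)
  also have "\<dots> = emeasure lborel (\<Union>j\<in>J. dyadic_interval d j \<inter> A)"
    using A disjoint_family_dyadic_interval[of d J]
    by (intro sum_emeasure) (auto simp: J_def disjoint_family_on_def)
  also have "(\<Union>j\<in>J. dyadic_interval d j \<inter> A) = A"
    using A(1) UN_dyadic_interval[of d] unfolding J_def by blast
  finally show ?thesis .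
qed

end

lemma sets_restrict_unit_interval:
  "A \<in> sets (restrict_space lborel {0<..1::real}) \<longleftrightarrow> A \<subseteq> {0<..1} \<and> A \<in> sets borel"
  by (subst sets_restrict_space_iff) auto

lemma G_dyad_measurable:
  assumes "g \<in> G_dyad"
  shows "g \<in> measurable (restrict_space lborel {0<..1}) (restrict_space lborel {0<..1})"
proof -
  obtain \<pi> :: "nat \<Rightarrow> nat" and d where p: "\<pi> permutes {1..2^d}"
    and tr: "\<forall>j\<in>{1..2^d}. \<forall>t\<in>dyadic_interval d j. g t = t + dyadic_shift \<pi> d j"
    using assms by (rule G_dyadE)
  show ?thesis
  proof (rule measurableI)
    fix t assume "t \<in> space (restrict_space lborel {0<..1::real})"
    then show "g t \<in> space (restrict_space lborel {0<..1::real})"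
      using dyadic_permutation_maps_unit_interval[OF p tr] by simp
  next
    fix A assume "A \<in> sets (restrict_space lborel {0<..1::real})"
    then have "g -` A \<inter> {0<..1} \<in> sets borel"
      using dyadic_permutation_vimage_borel[OF p tr] unfolding sets_restrict_unit_interval by simp
    then show "g -` A \<inter> space (restrict_space lborel {0<..1})
        \<in> sets (restrict_space lborel {0<..1})"
      unfolding sets_restrict_unit_interval by simp
  qed
qed

lemma distr_G_dyad:
  assumes "g \<in> G_dyad"
  shows "distr (restrict_space lborel {0<..1}) (restrict_space lborel {0<..1}) g
    = restrict_space lborel {0<..1}"
    (is "distr ?L ?L g = ?L")
proof (rule measure_eqI)
  obtain \<pi> :: "nat \<Rightarrow> nat" and d where p: "\<pi> permutes {1..2^d}"
    and tr: "\<forall>j\<in>{1..2^d}. \<forall>t\<in>dyadic_interval d j. g t = t + dyadic_shift \<pi> d j"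
    using assms by (rule G_dyadE)
  fix A assume A_sets: "A \<in> sets (distr ?L ?L g)"
  then have A: "A \<subseteq> {0<..1}" "A \<in> sets borel"
    unfolding sets_distr sets_restrict_unit_interval by auto
  have "emeasure (distr ?L ?L g) A = emeasure ?L (g -` A \<inter> {0<..1})"
    using A_sets G_dyad_measurable[OF assms] by (subst emeasure_distr) auto
  also have "\<dots> = emeasure lborel (g -` A \<inter> {0<..1})"
    by (rule emeasure_restrict_space) auto
  also have "\<dots> = emeasure lborel A"
    using A by (rule emeasure_dyadic_permutation_vimage[OF p tr])
  also have "\<dots> = emeasure ?L A"
    using A by (simp add: emeasure_restrict_space)
  finally show "emeasure (distr ?L ?L g) A = emeasure ?L A" .
qed simp

lemma distr_pair_measure_apfst:
  assumes "T \<in> measurable M M" "distr M M T = M" "sigma_finite_measure N"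
  shows "distr (M \<Otimes>\<^sub>M N) (M \<Otimes>\<^sub>M N) (apfst T) = M \<Otimes>\<^sub>M N"
proof -
  have "distr M M T \<Otimes>\<^sub>M distr N N (\<lambda>y. y) = distr (M \<Otimes>\<^sub>M N) (M \<Otimes>\<^sub>M N) (\<lambda>(x, y). (T x, y))"
    using assms(1,3) by (intro pair_measure_distr) auto
  then show ?thesis
    using assms(2) by (simp add: apfst_def map_prod_def)
qed

lemma distr_PiM_componentwise:
  assumes "finite I" "sigma_finite_measure M" "T \<in> measurable M M" "distr M M T = M"
  shows "distr (PiM I (\<lambda>_. M)) (PiM I (\<lambda>_. M)) (\<lambda>z. \<lambda>i\<in>I. T (z i)) = PiM I (\<lambda>_. M)"
proof -
  interpret product_sigma_finite "\<lambda>_. M"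
    using assms(2) by (simp add: product_sigma_finite_def)
  have T_PiM: "(\<lambda>z. \<lambda>i\<in>I. T (z i)) \<in> measurable (PiM I (\<lambda>_. M)) (PiM I (\<lambda>_. M))"
    using assms(3) by measurable
  show ?thesis
  proof (rule PiM_eqI)
    fix A assume A: "\<And>i. i \<in> I \<Longrightarrow> A i \<in> sets M"
    have "(\<lambda>z. \<lambda>i\<in>I. T (z i)) -` Pi\<^sub>E I A \<inter> space (PiM I (\<lambda>_. M))
        = Pi\<^sub>E I (\<lambda>i. T -` A i \<inter> space M)"
      by (auto simp: space_PiM PiE_iff)
    then have "emeasure (distr (PiM I (\<lambda>_. M)) (PiM I (\<lambda>_. M)) (\<lambda>z. \<lambda>i\<in>I. T (z i))) (Pi\<^sub>E I A)
        = (\<Prod>i\<in>I. emeasure M (T -` A i \<inter> space M))"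
      using A T_PiM assms(1,3)
      by (simp add: emeasure_distr sets_PiM_I_finite emeasure_PiM measurable_sets)
    also have "\<dots> = (\<Prod>i\<in>I. emeasure M (A i))"
      using A assms(3,4) by (intro prod.cong refl) (metis emeasure_distr)
    finally show "emeasure (distr (PiM I (\<lambda>_. M)) (PiM I (\<lambda>_. M)) (\<lambda>z. \<lambda>i\<in>I. T (z i))) (Pi\<^sub>E I A)
        = (\<Prod>i\<in>I. emeasure M (A i))" .
  qed (simp_all add: assms(1))
qed

lemma sigma_finite_mm: "sigma_finite_measure mu \<Longrightarrow> sigma_finite_measure (mm mu)"
  unfolding mm_def
  by (intro sigma_finite_pair_measure sigma_finite_measure_restrict_space)
    (auto intro: sigma_finite_lborel)

lemma apfst_eq: "apfst f = (\<lambda>p. (f (fst p), snd p))"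
  by (simp add: fun_eq_iff apfst_def map_prod_def case_prod_beta)

lemma measurable_apfst_G_dyad:
  assumes "g \<in> G_dyad"
  shows "apfst g \<in> measurable (mm mu) (mm mu)"
proof -
  have [measurable]: "g \<in> measurable (restrict_space lborel {0<..1}) (restrict_space lborel {0<..1})"
    using assms by (rule G_dyad_measurable)
  show ?thesis
    unfolding mm_def apfst_eq by measurable
qed

lemma distr_apfst_G_dyad:
  "sigma_finite_measure mu \<Longrightarrow> g \<in> G_dyad \<Longrightarrow> distr (mm mu) (mm mu) (apfst g) = mm mu"
  unfolding mm_def by (intro distr_pair_measure_apfst G_dyad_measurable distr_G_dyad)

lemma lift_map_eq: "lift_map g p z = (\<lambda>i\<in>{..<p}. apfst g (z i))"
  unfolding lift_map_def apfst_eq ..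

lemma measurable_lift_map: "g \<in> G_dyad \<Longrightarrow> lift_map g p \<in> measurable (mmp mu p) (mmp mu p)"
  unfolding lift_map_eq[abs_def] mmp_def using measurable_apfst_G_dyad by measurable

lemma distr_lift_map:
  "sigma_finite_measure mu \<Longrightarrow> g \<in> G_dyad \<Longrightarrow> distr (mmp mu p) (mmp mu p) (lift_map g p) = mmp mu p"
  unfolding lift_map_eq[abs_def] mmp_def
  by (intro distr_PiM_componentwise sigma_finite_mm measurable_apfst_G_dyad distr_apfst_G_dyad) auto

lemma space_mmp: "space (mmp mu p) = Pi\<^sub>E {..<p} (\<lambda>_. space (mm mu))"
  unfolding mmp_def by (simp add: space_PiM)

lemma lift_map_in_space_mmp:
  "g \<in> G_dyad \<Longrightarrow> z \<in> space (mmp mu p) \<Longrightarrow> lift_map g p z \<in> space (mmp mu p)"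
  using measurable_space[OF measurable_lift_map] .

lemma snd_lift_map: "i < p \<Longrightarrow> snd (lift_map g p z i) = snd (z i)"
  by (simp add: lift_map_def)

lemma tpart_in_space_mmp:
  "z \<in> space (mmp mu p) \<Longrightarrow> s + l \<le> p \<Longrightarrow> tpart s l z \<in> space (mmp mu l)"
  unfolding space_mmp tpart_def by (auto simp: PiE_iff)

lemma tcat_in_space_mmp:
  "x \<in> space (mmp mu p) \<Longrightarrow> y \<in> space (mmp mu q) \<Longrightarrow> tcat p q x y \<in> space (mmp mu (p + q))"
  unfolding space_mmp tcat_def by (auto simp: PiE_iff)

lemma tpart_lift_map: "s + l \<le> p \<Longrightarrow> tpart s l (lift_map g p z) = lift_map g l (tpart s l z)"
  unfolding tpart_def lift_map_def by (auto simp: fun_eq_iff)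

lemma tcat_lift_map:
  "tcat p q (lift_map g p x) (lift_map g q y) = lift_map g (p + q) (tcat p q x y)"
  unfolding tcat_def lift_map_def by (auto simp: fun_eq_iff)

lemma measurable_tcat_right:
  assumes "x \<in> space (mmp mu p)"
  shows "(\<lambda>y. tcat p q x y) \<in> measurable (mmp mu q) (mmp mu (p + q))"
  unfolding tcat_def
proof (subst (2) mmp_def, rule measurable_restrict)
  fix i assume "i \<in> {..<p + q}"
  then show "(\<lambda>y. if i < p then x i else y (i - p)) \<in> measurable (mmp mu q) (mm mu)"
    using assms by (cases "i < p")
      (auto simp: space_PiM mmp_def PiE_iff intro!: measurable_component_singleton)
qed

lemma measurable_tcat_left:
  assumes "y \<in> space (mmp mu q)"
  shows "(\<lambda>x. tcat p q x y) \<in> measurable (mmp mu p) (mmp mu (p + q))"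
  unfolding tcat_def
proof (subst (2) mmp_def, rule measurable_restrict)
  fix i assume "i \<in> {..<p + q}"
  then show "(\<lambda>x. if i < p then x i else y (i - p)) \<in> measurable (mmp mu p) (mm mu)"
    using assms by (cases "i < p")
      (auto simp: space_PiM mmp_def PiE_iff intro!: measurable_component_singleton)
qed

lemma const_on_orbits_lift_map:
  "const_on_orbits mu H p F \<Longrightarrow> g \<in> H \<Longrightarrow> z \<in> space (mmp mu p) \<Longrightarrow> F (lift_map g p z) = F z"
  unfolding const_on_orbits_def orbit_def by blast

context
  fixes mu :: "real measure" and H :: "(real \<Rightarrow> real) set" and n m k r :: nat
    and f f' :: "(nat \<Rightarrow> real \<times> real) \<Rightarrow> real"
  assumes sigma_finite: "sigma_finite_measure mu" and H: "H \<subseteq> G_dyad"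
    and f: "f \<in> borel_measurable (mmp mu n)" and f': "f' \<in> borel_measurable (mmp mu m)"
    and f_inv: "const_on_orbits mu H n f" and f'_inv: "const_on_orbits mu H m f'"
    and kr_n: "k + r \<le> n" and kr_m: "k + r \<le> m"
begin

lemma contr_integrand_lift_map:
  assumes g: "g \<in> H" and \<alpha>: "\<alpha> \<in> space (mmp mu (n - k - r))" and \<beta>: "\<beta> \<in> space (mmp mu (m - k - r))"
    and \<gamma>: "\<gamma> \<in> space (mmp mu r)" and \<rho>: "\<rho> \<in> space (mmp mu k)"
  shows "contr_integrand n m k r f f'
      (lift_map g (n - k - r) \<alpha>) (lift_map g (m - k - r) \<beta>) (lift_map g r \<gamma>) (lift_map g k \<rho>)
    = contr_integrand n m k r f f' \<alpha> \<beta> \<gamma> \<rho>"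
proof -
  have n: "n - k - r + r + k = n" and m: "k + r + (m - k - r) = m"
    using kr_n kr_m by simp_all
  define X where "X = tcat (n - k - r + r) k (tcat (n - k - r) r \<alpha> \<gamma>) \<rho>"
  define Y where "Y = tcat (k + r) (m - k - r) (tcat k r \<rho> \<gamma>) \<beta>"
  have X: "X \<in> space (mmp mu n)"
    using tcat_in_space_mmp[OF tcat_in_space_mmp[OF \<alpha> \<gamma>] \<rho>] unfolding X_def n .
  have Y: "Y \<in> space (mmp mu m)"
    using tcat_in_space_mmp[OF tcat_in_space_mmp[OF \<rho> \<gamma>] \<beta>] unfolding Y_def m .
  have "contr_integrand n m k r f f'
      (lift_map g (n - k - r) \<alpha>) (lift_map g (m - k - r) \<beta>) (lift_map g r \<gamma>) (lift_map g k \<rho>)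
    = f (lift_map g n X) * f' (lift_map g m Y)"
    unfolding contr_integrand_def X_def Y_def tcat_lift_map n m ..
  also have "\<dots> = f X * f' Y"
    using const_on_orbits_lift_map[OF f_inv g X] const_on_orbits_lift_map[OF f'_inv g Y] by simp
  finally show ?thesis
    unfolding contr_integrand_def X_def Y_def .
qed

lemma measurable_contr_integrand:
  assumes \<alpha>: "\<alpha> \<in> space (mmp mu (n - k - r))" and \<beta>: "\<beta> \<in> space (mmp mu (m - k - r))"
    and \<gamma>: "\<gamma> \<in> space (mmp mu r)"
  shows "contr_integrand n m k r f f' \<alpha> \<beta> \<gamma> \<in> borel_measurable (mmp mu k)"
proof -
  have n: "n - k - r + r + k = n" and m: "k + r + (m - k - r) = m"
    using kr_n kr_m by simp_all
  have left: "(\<lambda>\<rho>. tcat (n - k - r + r) k (tcat (n - k - r) r \<alpha> \<gamma>) \<rho>)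
      \<in> measurable (mmp mu k) (mmp mu n)"
    using measurable_tcat_right[OF tcat_in_space_mmp[OF \<alpha> \<gamma>], of k] unfolding n .
  have right: "(\<lambda>\<rho>. tcat (k + r) (m - k - r) (tcat k r \<rho> \<gamma>) \<beta>) \<in> measurable (mmp mu k) (mmp mu m)"
    using measurable_compose[OF measurable_tcat_left[OF \<gamma>, of k]
        measurable_tcat_left[OF \<beta>, of "k + r"]]
    unfolding m .
  show ?thesis
    unfolding contr_integrand_def
    by (intro borel_measurable_times measurable_compose[OF left f] measurable_compose[OF right f'])
qed

lemma integral_contr_integrand_lift_map:
  assumes g: "g \<in> H" and \<alpha>: "\<alpha> \<in> space (mmp mu (n - k - r))" and \<beta>: "\<beta> \<in> space (mmp mu (m - k - r))"
    and \<gamma>: "\<gamma> \<in> space (mmp mu r)"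
  shows "(\<integral>\<rho>. contr_integrand n m k r f f'
      (lift_map g (n - k - r) \<alpha>) (lift_map g (m - k - r) \<beta>) (lift_map g r \<gamma>) \<rho> \<partial>mmp mu k)
    = (\<integral>\<rho>. contr_integrand n m k r f f' \<alpha> \<beta> \<gamma> \<rho> \<partial>mmp mu k)"
proof -
  have gG: "g \<in> G_dyad"
    using g H by blast
  let ?F = "contr_integrand n m k r f f'
      (lift_map g (n - k - r) \<alpha>) (lift_map g (m - k - r) \<beta>) (lift_map g r \<gamma>)"
  have "(\<integral>\<rho>. ?F \<rho> \<partial>mmp mu k) = (\<integral>\<rho>. ?F \<rho> \<partial>distr (mmp mu k) (mmp mu k) (lift_map g k))"
    using distr_lift_map[OF sigma_finite gG] by simp
  also have "\<dots> = (\<integral>\<rho>. ?F (lift_map g k \<rho>) \<partial>mmp mu k)"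
    using gG \<alpha> \<beta> \<gamma>
    by (intro integral_distr measurable_lift_map measurable_contr_integrand lift_map_in_space_mmp)
  also have "\<dots> = (\<integral>\<rho>. contr_integrand n m k r f f' \<alpha> \<beta> \<gamma> \<rho> \<partial>mmp mu k)"
    using g \<alpha> \<beta> \<gamma> by (intro Bochner_Integration.integral_cong refl contr_integrand_lift_map)
  finally show ?thesis .
qed

end

theorem lemma5p5:
  fixes mu :: "real measure" and H :: "(real \<Rightarrow> real) set"
    and n m k r :: nat and f f' :: "(nat \<Rightarrow> real \<times> real) \<Rightarrow> real"
  assumes "sigma_finite_measure mu" and "sets mu = sets borel"
    and "H \<subseteq> G_dyad" and "is_group_of_maps H"
    and "n \<ge> 1" and "m \<ge> 1" and "k \<le> min n m" and "r \<le> min n m - k"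
    and "f \<in> borel_measurable (mmp mu n)" and "f' \<in> borel_measurable (mmp mu m)"
    and "integrable (mmp mu n) (\<lambda>z. (f z)\<^sup>2)" and "integrable (mmp mu m) (\<lambda>z. (f' z)\<^sup>2)"
    and "\<And>\<alpha> \<beta> \<gamma>. \<alpha> \<in> space (mmp mu (n - k - r)) \<Longrightarrow> \<beta> \<in> space (mmp mu (m - k - r)) \<Longrightarrow>
           \<gamma> \<in> space (mmp mu r) \<Longrightarrow>
           (\<integral>\<^sup>+\<rho>. ennreal \<bar>contr_integrand n m k r f f' \<alpha> \<beta> \<gamma> \<rho>\<bar> \<partial>mmp mu k) < \<infinity>"
    and "const_on_orbits mu H n f" and "const_on_orbits mu H m f'"
  shows "const_on_orbits mu H (n + m - 2 * k - r) (contraction mu n m k r f f')"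
proof -
  have kr: "k + r \<le> n" "k + r \<le> m"
    using assms(7,8) by auto
  define a where "a = n - k - r"
  define b where "b = m - k - r"
  have "n + m - 2 * k - r = a + b + r"
    using kr unfolding a_def b_def by simp
  moreover have
    "contraction mu n m k r f f' (lift_map g (a + b + r) z) = contraction mu n m k r f f' z"
    if g: "g \<in> H" and z: "z \<in> space (mmp mu (a + b + r))" for g z
  proof -
    have parts: "tpart 0 a (lift_map g (a + b + r) z) = lift_map g a (tpart 0 a z)"
      "tpart a b (lift_map g (a + b + r) z) = lift_map g b (tpart a b z)"
      "tpart (a + b) r (lift_map g (a + b + r) z) = lift_map g r (tpart (a + b) r z)"
      by (simp_all add: tpart_lift_map)
    have "tpart 0 a z \<in> space (mmp mu a)" "tpart a b z \<in> space (mmp mu b)"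
      "tpart (a + b) r z \<in> space (mmp mu r)"
      using z by (simp_all add: tpart_in_space_mmp)
    then show ?thesis
      unfolding contraction_def Let_def a_def[symmetric] b_def[symmetric] parts
      using integral_contr_integrand_lift_map[OF assms(1,3,9,10,14,15) kr g]
      by (simp add: snd_lift_map a_def b_def)
  qed
  ultimately show ?thesis
    unfolding const_on_orbits_def orbit_def by auto
qed

end
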